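(* Let $(X;Y,Z)$ be a non-degenerate subwing triple in $\mathcal{C}_n$, and let $Y'\in\mathcal{W}_Y$ and $Z'\in\mathcal{W}_Z$. (i) There are no nonzero $\mathcal{T}$-maps $Z'\to Y'$. (ii) There are no nonzero $\mathcal{T}$-maps $Y'\to Z'$. (iii) There is a nonzero $\mathcal{D}$-map $Z'\to Y'$ if and only if $Z'$ is on the left edge of $\mathcal{W}_Z$ and $Y'$ is on the right edge of $\mathcal{W}_Y$; in this case this map factors through the (nonzero) $\mathcal{D}$-map $Z\to Y$. (iv) There is a nonzero $\mathcal{D}$-map $Y'\to Z'$ if and only if $Z'$ is on the right edge of $\mathcal{W}_Z$, $Y'$ is on the left edge of $\mathcal{W}_Y$, and $\operatorname{ql}X=n-1$; in this case this map factors through the nonzero $\mathcal{D}$-endomorphism of $X$.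
   Context: Let $k$ be algebraically closed, $n\ge2$, $\mathcal{T}_n$ the tube of rank $n$ (finite-dimensional nilpotent representations of the cyclically oriented $\tilde A_{n-1}$-quiver; hereditary, AR-translation $\tau$), $\mathcal{C}_n=D^b(\mathcal{T}_n)/\tau^{-1}[1]$ the cluster tube, with indecomposables identified with those of $\mathcal{T}_n$. Indecomposables have coordinates $(a,b)$, $a\in\mathbb{Z}/n$, $b\ge1$ the quasilength $\operatorname{ql}$, with $\tau(a,b)=(a-1,b)$ and irreducible maps $(a,b)\to(a,b+1)$ and $(a,b)\to(a+1,b-1)$ ($b\ge2$). For indecomposables $X,Y$, $\operatorname{Hom}_{\mathcal{C}_n}(X,Y)=\operatorname{Hom}_{\mathcal{T}_n}(X,Y)\oplus\operatorname{Hom}_{D^b}(X,\tau^{-1}Y[1])$, the second summand $\cong D\operatorname{Hom}_{\mathcal{T}_n}(Y,\tau^2X)$; elements of the first are $\mathcal{T}$-maps, of the second $\mathcal{D}$-maps. For $X=(a,i)$, $i\le n-1$, the wing $\mathcal{W}_X$ is $\{(a+s,i'):s\ge0,i'\ge1,s+i'\le i\}$, with left edge $\{(a,i'):1\le i'\le i\}$ and right edge $\{(a+i-i',i'):1\le i'\le i\}$. A non-degenerate subwing triple $(X;Y,Z)$ consists of $X=(a,b)$ with $3\le b\le n-1$, $Y=(a,c)$ and $Z=(a+c+1,b-c-1)$ for some $1\le c\le b-2$. *)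

theory Defs
  imports "HOL-Computational_Algebra.Polynomial"
begin

text \<open>Concrete model of the tube T_n over a field k.
  An indecomposable is a pair (a,b) :: int * nat, with a normalised modulo n
  (a in {0..<n}) and b = quasilength >= 1.  The module (a,b) has basis
  v_0,...,v_(b-1), v_j sitting at vertex (a+j) mod n; the nilpotent operator
  sends v_j to v_(j-1) and v_0 to 0.  So (a,b) has socle S_a, the
  irreducible maps are (a,b) -> (a,b+1) (mono) and (a,b) -> (a+1,b-1) (epi),
  and tau(a,b) = (a-1,b) (rotation of the quiver; on morphisms tau is the
  identity on matrices).  A morphism (a,b) -> (a',b') is a b' x b matrix
  (entries outside the range are 0) respecting grading and operator.\<close>

type_synonym obj = "int \<times> nat"
type_synonym 'k mat = "nat \<Rightarrow> nat \<Rightarrow> 'k"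

definition obj :: "nat \<Rightarrow> int \<Rightarrow> nat \<Rightarrow> obj" where
  "obj n a b = (a mod int n, b)"

definition ql :: "obj \<Rightarrow> nat" where
  "ql X = snd X"

definition tau2 :: "nat \<Rightarrow> obj \<Rightarrow> obj" where
  "tau2 n X = obj n (fst X - 2) (snd X)"

definition tmap :: "nat \<Rightarrow> obj \<Rightarrow> obj \<Rightarrow> 'k::field mat \<Rightarrow> bool" where
  "tmap n X Y M \<longleftrightarrow>
     (\<forall>i j. (snd Y \<le> i \<or> snd X \<le> j) \<longrightarrow> M i j = 0) \<and>
     (\<forall>i j. M i j \<noteq> 0 \<longrightarrow> (fst Y + int i) mod int n = (fst X + int j) mod int n) \<and>
     (\<forall>i<snd Y. \<forall>j<snd X. M (Suc i) j = (if j = 0 then 0 else M i (j - 1)))"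

definition homT :: "nat \<Rightarrow> obj \<Rightarrow> obj \<Rightarrow> 'k::field mat set" where
  "homT n X Y = {M. tmap n X Y M}"

definition mmul :: "nat \<Rightarrow> 'k::field mat \<Rightarrow> 'k mat \<Rightarrow> 'k mat" where
  "mmul m G F = (\<lambda>i j. \<Sum>k<m. G i k * F k j)"

definition zero_mat :: "'k::field mat" where
  "zero_mat = (\<lambda>i j. 0)"

text \<open>D-maps X -> Y: elements of Hom_D(X, tau^-1 Y[1]) = D Hom_T(Y, tau^2 X),
  i.e. linear functionals on homT n Y (tau2 n X) (values off that space are
  irrelevant).\<close>
definition dmap :: "nat \<Rightarrow> obj \<Rightarrow> obj \<Rightarrow> ('k::field mat \<Rightarrow> 'k) \<Rightarrow> bool" where
  "dmap n X Y \<phi> \<longleftrightarrow>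
     (\<forall>M\<in>homT n Y (tau2 n X). \<forall>M'\<in>homT n Y (tau2 n X).
        \<phi> (\<lambda>i j. M i j + M' i j) = \<phi> M + \<phi> M') \<and>
     (\<forall>M\<in>homT n Y (tau2 n X). \<forall>c. \<phi> (\<lambda>i j. c * M i j) = c * \<phi> M)"

definition dmap_nonzero :: "nat \<Rightarrow> obj \<Rightarrow> obj \<Rightarrow> ('k::field mat \<Rightarrow> 'k) \<Rightarrow> bool" where
  "dmap_nonzero n X Y \<phi> \<longleftrightarrow> dmap n X Y \<phi> \<and> (\<exists>M\<in>homT n Y (tau2 n X). \<phi> M \<noteq> 0)"

definition dmap_eq :: "nat \<Rightarrow> obj \<Rightarrow> obj \<Rightarrow> ('k::field mat \<Rightarrow> 'k) \<Rightarrow> ('k mat \<Rightarrow> 'k) \<Rightarrow> bool" where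
  "dmap_eq n X Y \<phi> \<psi> \<longleftrightarrow> (\<forall>M\<in>homT n Y (tau2 n X). \<phi> M = \<psi> M)"

text \<open>Composite g o d o f of T-maps f : X' -> X, g : Y -> Y' with a D-map
  d : X -> Y (Serre/AR duality is natural): the functional on
  Hom_T(Y', tau^2 X') given by h |-> d((tau^2 f) o h o g).\<close>
definition dcomp :: "obj \<Rightarrow> obj \<Rightarrow> 'k::field mat \<Rightarrow> ('k mat \<Rightarrow> 'k) \<Rightarrow> 'k mat \<Rightarrow> ('k mat \<Rightarrow> 'k)" where
  "dcomp X' Y' F d G = (\<lambda>H. d (mmul (snd Y') (mmul (snd X') F H) G))"

definition has_nonzero_tmap :: "nat \<Rightarrow> obj \<Rightarrow> obj \<Rightarrow> 'k::field itself \<Rightarrow> bool" where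
  "has_nonzero_tmap n X Y (_::'k itself) \<longleftrightarrow> (\<exists>M::'k mat. tmap n X Y M \<and> M \<noteq> zero_mat)"

definition wing :: "nat \<Rightarrow> obj \<Rightarrow> obj set" where
  "wing n X = {obj n (fst X + int s) i' | s i'. 1 \<le> i' \<and> s + i' \<le> snd X}"

definition left_edge :: "nat \<Rightarrow> obj \<Rightarrow> obj set" where
  "left_edge n X = {obj n (fst X) i' | i'. 1 \<le> i' \<and> i' \<le> snd X}"

definition right_edge :: "nat \<Rightarrow> obj \<Rightarrow> obj set" where
  "right_edge n X = {obj n (fst X + int (snd X) - int i') i' | i'. 1 \<le> i' \<and> i' \<le> snd X}"

definition alg_closed_type :: "'k::field itself \<Rightarrow> bool" where
  "alg_closed_type _ \<longleftrightarrow> (\<forall>p::'k poly. 1 \<le> degree p \<longrightarrow> (\<exists>x. poly p x = 0))"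

end

theory Submission
  imports Defs
begin

text \<open>A T-map between indecomposables of the tube is determined by its top row, and the only
  admissible nonzero entries are the shifts k with k < ql X \<le> k + ql Y and matching vertices;
  so Hom_T(X, Y) is spanned by shift matrices, and the D-maps X \<rightarrow> Y, being functionals on
  Hom_T(Y, \<tau>^2 X), exist exactly when such a shift exists. For objects of the two subwings of
  a triple all these vertex conditions are congruences between integers that differ by less
  than n, hence honest equations, which pin down the edges (and ql X = n - 1). In the nonzero
  cases both D-spaces involved are one-dimensional and a composite of shift matrices is again a
  shift matrix, so every D-map is a scalar multiple of the composite through Z \<rightarrow> Y,
  respectively through the endomorphism of X.\<close>

definition shift_mat :: "nat \<Rightarrow> nat \<Rightarrow> nat \<Rightarrow> 'k::field mat" where
  "shift_mat r c k = (\<lambda>i j. if i < r \<and> j < c \<and> j = i + k then 1 else 0)"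

definition hom_shift :: "nat \<Rightarrow> obj \<Rightarrow> obj \<Rightarrow> nat \<Rightarrow> bool" where
  "hom_shift n X Y k \<longleftrightarrow>
     k < snd X \<and> snd X \<le> k + snd Y \<and> fst Y mod int n = (fst X + int k) mod int n"

lemma tmap_entry:
  assumes "tmap n X Y M"
  shows "M i j = (if i \<le> j \<and> j < snd X \<and> i < snd Y then M 0 (j - i) else 0)"
proof (induction i arbitrary: j)
  case 0
  then show ?case using assms unfolding tmap_def by auto
next
  case (Suc i)
  show ?case
  proof (cases "Suc i < snd Y \<and> j < snd X")
    case True
    then have "M (Suc i) j = (if j = 0 then 0 else M i (j - 1))"
      using assms unfolding tmap_def by auto
    then show ?thesis using Suc.IH[of "j - 1"] True by (auto simp: Suc_le_eq)
  next
    case False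
    then show ?thesis using assms unfolding tmap_def by auto
  qed
qed

lemma tmap_top_row_nonzero_imp_hom_shift:
  assumes t: "tmap n X Y M" and nz: "M 0 k \<noteq> 0"
  shows "hom_shift n X Y k"
proof -
  have k: "k < snd X" and Y_pos: "0 < snd Y"
    using t nz unfolding tmap_def by (metis not_le)+
  have "snd X \<le> k + snd Y"
  proof (rule ccontr)
    assume short: "\<not> snd X \<le> k + snd Y"
    define i where "i = snd Y - 1"
    \<comment> \<open>the operator moves the entry M 0 k down to row snd Y, which lies outside the matrix\<close>
    have "i < snd Y" "k + snd Y < snd X" "k + snd Y \<noteq> 0"
      using short Y_pos unfolding i_def by auto
    then have "M (Suc i) (k + snd Y) = M i (k + snd Y - 1)"
      using t unfolding tmap_def by auto
    moreover have "M (Suc i) (k + snd Y) = 0"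
      using t Y_pos unfolding tmap_def i_def by auto
    moreover have "M i (k + snd Y - 1) = M 0 k"
      using tmap_entry[OF t, of i "k + snd Y - 1"] short Y_pos unfolding i_def by auto
    ultimately show False using nz by simp
  qed
  moreover have "fst Y mod int n = (fst X + int k) mod int n"
    using t nz unfolding tmap_def by (metis add.right_neutral of_nat_0)
  ultimately show ?thesis using k unfolding hom_shift_def by blast
qed

lemma tmap_eq_single_shift:
  assumes t: "tmap n X Y M" and unique: "\<And>k. hom_shift n X Y k \<Longrightarrow> k = k0"
  shows "M = (\<lambda>i j. M 0 k0 * shift_mat (snd Y) (snd X) k0 i j)"
proof (intro ext)
  fix i j
  show "M i j = M 0 k0 * shift_mat (snd Y) (snd X) k0 i j"
  proof (cases "i \<le> j \<and> j < snd X \<and> i < snd Y \<and> M 0 (j - i) \<noteq> 0")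
    case True
    then have "j - i = k0" using unique tmap_top_row_nonzero_imp_hom_shift[OF t] by blast
    then show ?thesis using tmap_entry[OF t, of i j] True by (auto simp: shift_mat_def)
  next
    case False
    then show ?thesis using tmap_entry[OF t, of i j] by (auto simp: shift_mat_def)
  qed
qed

lemma tmap_eq_zero:
  assumes t: "tmap n X Y M" and no_shift: "\<And>k. \<not> hom_shift n X Y k"
  shows "M = zero_mat"
proof (intro ext)
  fix i j
  show "M i j = zero_mat i j"
    using tmap_entry[OF t, of i j] tmap_top_row_nonzero_imp_hom_shift[OF t, of "j - i"] no_shift
    by (auto simp: zero_mat_def)
qed

lemma tmap_shift_mat:
  assumes "hom_shift n X Y k"
  shows "tmap n X Y (shift_mat (snd Y) (snd X) k)"
proof -
  have "(fst Y + int i) mod int n = (fst X + int (i + k)) mod int n" for i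
    using mod_add_cong[of "fst Y" "int n" "fst X + int k" "int i" "int i"] assms
    unfolding hom_shift_def by (simp add: ac_simps)
  then show ?thesis using assms unfolding tmap_def shift_mat_def hom_shift_def by auto
qed

lemma tmap_scale:
  assumes "tmap n X Y M"
  shows "tmap n X Y (\<lambda>i j. x * M i j)"
  using assms unfolding tmap_def by auto

lemma has_nonzero_tmap_iff:
  "has_nonzero_tmap n X Y TYPE('k::field) \<longleftrightarrow> (\<exists>k. hom_shift n X Y k)"
proof
  assume "has_nonzero_tmap n X Y TYPE('k)"
  then show "\<exists>k. hom_shift n X Y k"
    unfolding has_nonzero_tmap_def using tmap_eq_zero by blast
next
  assume "\<exists>k. hom_shift n X Y k"
  then obtain k where k: "hom_shift n X Y k" ..
  then have "(shift_mat (snd Y) (snd X) k :: 'k mat) 0 k \<noteq> zero_mat 0 k"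
    unfolding hom_shift_def shift_mat_def zero_mat_def by simp
  then show "has_nonzero_tmap n X Y TYPE('k)"
    unfolding has_nonzero_tmap_def using tmap_shift_mat[OF k] by metis
qed

lemma snd_tau2 [simp]: "snd (tau2 n X) = snd X"
  by (simp add: tau2_def obj_def)

lemma dmap_eval: "dmap n X Y (\<lambda>M. M i j)"
  unfolding dmap_def by auto

lemma dmap_scale:
  assumes "dmap n X Y u" "M \<in> homT n Y (tau2 n X)"
  shows "u (\<lambda>i j. x * M i j) = x * u M"
  using assms unfolding dmap_def by blast

lemma ex_dmap_nonzero_iff:
  "(\<exists>u::'k::field mat \<Rightarrow> 'k. dmap_nonzero n X Y u) \<longleftrightarrow> (\<exists>k. hom_shift n Y (tau2 n X) k)"
proof
  assume "\<exists>u::'k mat \<Rightarrow> 'k. dmap_nonzero n X Y u"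
  then obtain u :: "'k mat \<Rightarrow> 'k" and M where
    u: "dmap n X Y u" and M: "M \<in> homT n Y (tau2 n X)" "u M \<noteq> 0"
    unfolding dmap_nonzero_def by blast
  show "\<exists>k. hom_shift n Y (tau2 n X) k"
  proof (rule ccontr)
    assume "\<nexists>k. hom_shift n Y (tau2 n X) k"
    then have "M = (\<lambda>i j. 0 * M i j)"
      using tmap_eq_zero M(1) unfolding homT_def zero_mat_def by fastforce
    then have "u M = 0 * u M" using dmap_scale[OF u M(1)] by metis
    then show False using M(2) by simp
  qed
next
  assume "\<exists>k. hom_shift n Y (tau2 n X) k"
  then obtain k where k: "hom_shift n Y (tau2 n X) k" ..
  then have "shift_mat (snd X) (snd Y) k \<in> homT n Y (tau2 n X)"
    "(shift_mat (snd X) (snd Y) k :: 'k mat) 0 k \<noteq> 0"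
    using tmap_shift_mat[OF k] unfolding homT_def hom_shift_def shift_mat_def by auto
  then show "\<exists>u::'k mat \<Rightarrow> 'k. dmap_nonzero n X Y u"
    unfolding dmap_nonzero_def using dmap_eval by blast
qed

lemma dmap_on_single_shift:
  fixes u :: "'k::field mat \<Rightarrow> 'k"
  assumes u: "dmap n X Y u" and M: "M \<in> homT n Y (tau2 n X)"
    and shifts: "{m. hom_shift n Y (tau2 n X) m} = {k}"
  shows "u M = M 0 k * u (shift_mat (snd X) (snd Y) k)"
proof -
  have "shift_mat (snd X) (snd Y) k \<in> homT n Y (tau2 n X)"
    using tmap_shift_mat[of n Y "tau2 n X" k] shifts unfolding homT_def by auto
  moreover have "M = (\<lambda>i j. M 0 k * shift_mat (snd X) (snd Y) k i j)"
    using tmap_eq_single_shift[of n Y "tau2 n X" M k] M shifts unfolding homT_def by auto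
  ultimately show ?thesis using dmap_scale[OF u] by metis
qed

lemma mmul_shift_mat:
  assumes "c \<le> m + l"
  shows "mmul m (shift_mat r m k) (shift_mat m c l) = (shift_mat r c (k + l) :: 'k::field mat)"
proof (intro ext)
  fix i j
  have "mmul m (shift_mat r m k) (shift_mat m c l :: 'k mat) i j
      = (\<Sum>h<m. if h = i + k then (if i < r \<and> j < c \<and> j = h + l then 1 else 0) else (0::'k))"
    unfolding mmul_def shift_mat_def by (intro sum.cong) auto
  also have "\<dots> = shift_mat r c (k + l) i j"
    using assms by (auto simp: sum.delta' shift_mat_def)
  finally show "mmul m (shift_mat r m k) (shift_mat m c l :: 'k mat) i j = shift_mat r c (k + l) i j" .
qed

lemma mmul_scale_left: "mmul m (\<lambda>i j. x * A i j) B = (\<lambda>i j. x * mmul m A B i j)"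
  unfolding mmul_def by (auto simp: sum_distrib_left mult.assoc)

lemma mmul_scale_right: "mmul m A (\<lambda>i j. x * B i j) = (\<lambda>i j. x * mmul m A B i j)"
  unfolding mmul_def by (auto simp: sum_distrib_left mult.left_commute)

lemma dmap_factors_through_shifts:
  fixes d u :: "'k::field mat \<Rightarrow> 'k"
  assumes shifts': "{m. hom_shift n Y' (tau2 n X') m} = {j}"
    and shifts: "{m. hom_shift n Y (tau2 n X) m} = {k}"
    and F: "hom_shift n X' X i" and G: "hom_shift n Y Y' l"
    and k: "i + j + l = k"
    and d: "dmap_nonzero n X Y d" and u: "dmap n X' Y' u"
  shows "\<exists>F G. tmap n X' X F \<and> tmap n Y Y' G \<and> dmap_eq n X' Y' u (dcomp X' Y' F d G)"
proof -
  define S' :: "'k mat" where "S' = shift_mat (snd X') (snd Y') j"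
  define S :: "'k mat" where "S = shift_mat (snd X) (snd Y) k"
  have S: "S \<in> homT n Y (tau2 n X)"
    using tmap_shift_mat[of n Y "tau2 n X" k] shifts unfolding homT_def S_def by auto
  obtain M where d': "dmap n X Y d" and M: "M \<in> homT n Y (tau2 n X)" "d M \<noteq> 0"
    using d unfolding dmap_nonzero_def by blast
  have "d S \<noteq> 0"
    using dmap_on_single_shift[OF d' M(1) shifts] M(2) unfolding S_def by auto
  \<comment> \<open>both D-spaces are one-dimensional, so a scalar multiple of the composite matches u\<close>
  define f where "f = u S' / d S"
  define F where "F = (\<lambda>x y. f * shift_mat (snd X) (snd X') i x y :: 'k)"
  define G where "G = (shift_mat (snd Y') (snd Y) l :: 'k mat)"
  have "dmap_eq n X' Y' u (dcomp X' Y' F d G)"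
    unfolding dmap_eq_def
  proof
    fix H :: "'k mat" assume H: "H \<in> homT n Y' (tau2 n X')"
    define h where "h = H 0 j"
    have "tmap n Y' (tau2 n X') H" "\<And>m. hom_shift n Y' (tau2 n X') m \<Longrightarrow> m = j"
      using H shifts' unfolding homT_def by blast+
    then have H_eq: "H = (\<lambda>x y. h * S' x y)"
      unfolding S'_def h_def by (metis tmap_eq_single_shift snd_tau2)
    have "hom_shift n Y' (tau2 n X') j" using shifts' by blast
    then have "snd Y' \<le> snd X' + j" "snd Y \<le> snd Y' + l"
      using G unfolding hom_shift_def by auto
    then have "mmul (snd Y') (mmul (snd X') (shift_mat (snd X) (snd X') i) S') G = S"
      unfolding S'_def S_def G_def k[symmetric] by (simp add: mmul_shift_mat)
    then have "dcomp X' Y' F d G H = d (\<lambda>x y. (f * h) * S x y)"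
      unfolding dcomp_def F_def H_eq by (simp add: mmul_scale_left mmul_scale_right mult.assoc)
    also have "\<dots> = f * h * d S"
      using dmap_scale[OF d' S] .
    also have "\<dots> = u H"
      using dmap_on_single_shift[OF u H shifts'] \<open>d S \<noteq> 0\<close> unfolding f_def S'_def h_def by simp
    finally show "u H = dcomp X' Y' F d G H" ..
  qed
  moreover have "tmap n X' X F" "tmap n Y Y' G"
    unfolding F_def G_def using tmap_scale[OF tmap_shift_mat[OF F]] tmap_shift_mat[OF G] by auto
  ultimately show ?thesis by blast
qed

lemma fst_obj [simp]: "fst (obj n a b) = a mod int n"
  and snd_obj [simp]: "snd (obj n a b) = b"
  by (simp_all add: obj_def)

lemma tau2_obj: "tau2 n (obj n a b) = obj n (a - 2) b"
  by (simp add: tau2_def obj_def mod_diff_left_eq)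

lemma hom_shift_obj:
  "hom_shift n (obj n x p) (obj n y q) k \<longleftrightarrow>
     k < p \<and> p \<le> k + q \<and> y mod int n = (x + int k) mod int n"
  by (simp add: hom_shift_def mod_add_left_eq)

lemma mod_eq_iff_eq_small:
  fixes x y N :: int
  assumes "\<bar>x - y\<bar> < N"
  shows "x mod N = y mod N \<longleftrightarrow> x = y"
proof
  assume "x mod N = y mod N"
  then have "N dvd x - y" by (simp add: mod_eq_dvd_iff)
  then show "x = y" using assms dvd_imp_le_int[of "x - y" N] by fastforce
qed simp

lemma obj_eq_iff: "obj n x p = obj n y q \<longleftrightarrow> x mod int n = y mod int n \<and> p = q"
  by (auto simp: obj_def)

lemma wing_obj: "wing n (obj n a c) = {obj n (a + int s) p | s p. 1 \<le> p \<and> s + p \<le> c}"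
  unfolding wing_def by (simp add: obj_def mod_add_left_eq)

lemma left_edge_obj_iff:
  assumes "c < n" "1 \<le> p" "s + p \<le> c"
  shows "obj n (a + int s) p \<in> left_edge n (obj n a c) \<longleftrightarrow> s = 0"
proof -
  have "(a + int s) mod int n = a mod int n \<longleftrightarrow> a + int s = a"
    by (rule mod_eq_iff_eq_small) (use assms in simp)
  moreover have "obj n (a + int s) p \<in> left_edge n (obj n a c) \<longleftrightarrow> (a + int s) mod int n = a mod int n"
    using assms unfolding left_edge_def by (auto simp: obj_eq_iff)
  ultimately show ?thesis by simp
qed

lemma right_edge_obj_iff:
  assumes "c < n" "1 \<le> p" "s + p \<le> c"
  shows "obj n (a + int s) p \<in> right_edge n (obj n a c) \<longleftrightarrow> s + p = c"
proof -
  have "(a + int s) mod int n = (a + int c - int p) mod int n \<longleftrightarrow> a + int s = a + int c - int p"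
    by (rule mod_eq_iff_eq_small) (use assms in simp)
  moreover have "obj n (a + int s) p \<in> right_edge n (obj n a c) \<longleftrightarrow>
      (a + int s) mod int n = (a + int c - int p) mod int n"
    using assms mod_add_left_eq[of a "int n" "int c - int p"]
    unfolding right_edge_def by (auto simp: obj_eq_iff add_diff_eq)
  ultimately show ?thesis by linarith
qed

locale subwing_triple =
  fixes n :: nat and a :: int and b c s p t q :: nat
  assumes b_lt_n: "b < n" and c_pos: "1 \<le> c" and c_le: "c + 2 \<le> b"
    and p_pos: "1 \<le> p" and Y'_in_wing: "s + p \<le> c"
    and q_pos: "1 \<le> q" and Z'_in_wing: "t + q \<le> b - c - 1"
begin

abbreviation "X \<equiv> obj n a b"
abbreviation "Y \<equiv> obj n a c"
abbreviation "Z \<equiv> obj n (a + int c + 1) (b - c - 1)"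
abbreviation "Y' \<equiv> obj n (a + int s) p"
abbreviation "Z' \<equiv> obj n (a + int c + 1 + int t) q"

lemma Z'_bound: "c + 1 + t + q \<le> b"
  using Z'_in_wing c_le by linarith

lemma no_nonzero_tmap_Z'_Y': "\<not> has_nonzero_tmap n Z' Y' TYPE('k::field)"
proof -
  have "(a + int s) mod int n = (a + int c + 1 + int t + int k) mod int n
      \<longleftrightarrow> a + int s = a + int c + 1 + int t + int k" if "k < q" for k
    by (rule mod_eq_iff_eq_small) (use that Z'_bound b_lt_n Y'_in_wing in linarith)
  then show ?thesis
    unfolding has_nonzero_tmap_iff hom_shift_obj using Y'_in_wing by fastforce
qed

lemma no_nonzero_tmap_Y'_Z': "\<not> has_nonzero_tmap n Y' Z' TYPE('k::field)"
proof -
  have "(a + int c + 1 + int t) mod int n = (a + int s + int k) mod int n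
      \<longleftrightarrow> a + int c + 1 + int t = a + int s + int k" if "k < p" for k
    by (rule mod_eq_iff_eq_small) (use that Z'_bound b_lt_n Y'_in_wing in linarith)
  then show ?thesis
    unfolding has_nonzero_tmap_iff hom_shift_obj using Y'_in_wing by fastforce
qed

lemma hom_shift_Y'_tau2_Z'_iff:
  "hom_shift n Y' (tau2 n Z') k \<longleftrightarrow> t = 0 \<and> s + p = c \<and> k = p - 1"
proof -
  have "(a + int c + 1 + int t - 2) mod int n = (a + int s + int k) mod int n
      \<longleftrightarrow> a + int c + 1 + int t - 2 = a + int s + int k" if "k < p"
    by (rule mod_eq_iff_eq_small) (use that Z'_bound b_lt_n Y'_in_wing in linarith)
  then have "hom_shift n Y' (tau2 n Z') k \<longleftrightarrow>
      k < p \<and> p \<le> k + q \<and> a + int c + 1 + int t - 2 = a + int s + int k"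
    unfolding tau2_obj hom_shift_obj by blast
  also have "\<dots> \<longleftrightarrow> t = 0 \<and> s + p = c \<and> k = p - 1"
    using Y'_in_wing p_pos q_pos by auto
  finally show ?thesis .
qed

lemma hom_shift_Y_tau2_Z_iff: "hom_shift n Y (tau2 n Z) k \<longleftrightarrow> k = c - 1"
proof -
  have "(a + int c + 1 - 2) mod int n = (a + int k) mod int n
      \<longleftrightarrow> a + int c + 1 - 2 = a + int k" if "k < c"
    by (rule mod_eq_iff_eq_small) (use that b_lt_n c_le in linarith)
  then have "hom_shift n Y (tau2 n Z) k \<longleftrightarrow>
      k < c \<and> c \<le> k + (b - c - 1) \<and> a + int c + 1 - 2 = a + int k"
    unfolding tau2_obj hom_shift_obj by blast
  also have "\<dots> \<longleftrightarrow> k = c - 1"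
    using c_pos c_le by auto
  finally show ?thesis .
qed

lemma hom_shift_Z'_tau2_Y'_iff:
  "hom_shift n Z' (tau2 n Y') k \<longleftrightarrow> s = 0 \<and> t + q = b - c - 1 \<and> b = n - 1 \<and> k = q - 1"
proof -
  have "(a + int s - 2) mod int n = (a + int c + 1 + int t + int k) mod int n
      \<longleftrightarrow> a + int s - 2 + int n = a + int c + 1 + int t + int k" if "k < q"
  proof -
    have "(a + int s - 2) mod int n = (a + int s - 2 + int n) mod int n" by simp
    also have "\<dots> = (a + int c + 1 + int t + int k) mod int n
        \<longleftrightarrow> a + int s - 2 + int n = a + int c + 1 + int t + int k"
      by (rule mod_eq_iff_eq_small) (use that Z'_bound b_lt_n Y'_in_wing in linarith)
    finally show ?thesis .
  qed
  then have "hom_shift n Z' (tau2 n Y') k \<longleftrightarrow>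
      k < q \<and> q \<le> k + p \<and> a + int s - 2 + int n = a + int c + 1 + int t + int k"
    unfolding tau2_obj hom_shift_obj by blast
  also have "\<dots> \<longleftrightarrow> s = 0 \<and> t + q = b - c - 1 \<and> b = n - 1 \<and> k = q - 1"
    using Y'_in_wing Z'_bound b_lt_n p_pos q_pos by auto
  finally show ?thesis .
qed

lemma hom_shift_X_tau2_X_iff: "hom_shift n X (tau2 n X) k \<longleftrightarrow> b = n - 1 \<and> k = b - 1"
proof -
  have "(a - 2) mod int n = (a + int k) mod int n \<longleftrightarrow> a - 2 + int n = a + int k" if "k < b"
  proof -
    have "(a - 2) mod int n = (a - 2 + int n) mod int n" by simp
    also have "\<dots> = (a + int k) mod int n \<longleftrightarrow> a - 2 + int n = a + int k"
      by (rule mod_eq_iff_eq_small) (use that b_lt_n in linarith)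
    finally show ?thesis .
  qed
  then have "hom_shift n X (tau2 n X) k \<longleftrightarrow> k < b \<and> b \<le> k + b \<and> a - 2 + int n = a + int k"
    unfolding tau2_obj hom_shift_obj by blast
  also have "\<dots> \<longleftrightarrow> b = n - 1 \<and> k = b - 1"
    using b_lt_n c_le by auto
  finally show ?thesis .
qed

lemma ex_dmap_nonzero_Z_Y: "\<exists>d::'k::field mat \<Rightarrow> 'k. dmap_nonzero n Z Y d"
  unfolding ex_dmap_nonzero_iff hom_shift_Y_tau2_Z_iff by blast

lemma ex_dmap_nonzero_X_X:
  assumes "b = n - 1"
  shows "\<exists>e::'k::field mat \<Rightarrow> 'k. dmap_nonzero n X X e"
  unfolding ex_dmap_nonzero_iff hom_shift_X_tau2_X_iff using assms by blast

lemma ex_dmap_nonzero_Z'_Y'_iff: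
  "(\<exists>u::'k::field mat \<Rightarrow> 'k. dmap_nonzero n Z' Y' u) \<longleftrightarrow> Z' \<in> left_edge n Z \<and> Y' \<in> right_edge n Y"
proof -
  have "Z' \<in> left_edge n Z \<longleftrightarrow> t = 0"
    by (rule left_edge_obj_iff) (use b_lt_n q_pos Z'_in_wing in auto)
  moreover have "Y' \<in> right_edge n Y \<longleftrightarrow> s + p = c"
    by (rule right_edge_obj_iff) (use b_lt_n c_le p_pos Y'_in_wing in auto)
  ultimately show ?thesis
    unfolding ex_dmap_nonzero_iff hom_shift_Y'_tau2_Z'_iff by blast
qed

lemma ex_dmap_nonzero_Y'_Z'_iff:
  "(\<exists>u::'k::field mat \<Rightarrow> 'k. dmap_nonzero n Y' Z' u) \<longleftrightarrow>
     Z' \<in> right_edge n Z \<and> Y' \<in> left_edge n Y \<and> b = n - 1"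
proof -
  have "Z' \<in> right_edge n Z \<longleftrightarrow> t + q = b - c - 1"
    by (rule right_edge_obj_iff) (use b_lt_n q_pos Z'_in_wing in auto)
  moreover have "Y' \<in> left_edge n Y \<longleftrightarrow> s = 0"
    by (rule left_edge_obj_iff) (use b_lt_n c_le p_pos Y'_in_wing in auto)
  ultimately show ?thesis
    unfolding ex_dmap_nonzero_iff hom_shift_Z'_tau2_Y'_iff by blast
qed

lemma dmap_Z'_Y'_factors_through_Z_Y:
  fixes d u :: "'k::field mat \<Rightarrow> 'k"
  assumes d: "dmap_nonzero n Z Y d" and u: "dmap_nonzero n Z' Y' u"
  shows "\<exists>F G. tmap n Z' Z F \<and> tmap n Y Y' G \<and> dmap_eq n Z' Y' u (dcomp Z' Y' F d G)"
proof -
  have "\<exists>k. hom_shift n Y' (tau2 n Z') k"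
    using u ex_dmap_nonzero_iff by blast
  then have "t = 0" "s = c - p"
    unfolding hom_shift_Y'_tau2_Z'_iff by auto
  show ?thesis
  proof (rule dmap_factors_through_shifts[where i = 0 and j = "p - 1" and l = "c - p" and k = "c - 1"])
    show "{k. hom_shift n Y' (tau2 n Z') k} = {p - 1}"
      using hom_shift_Y'_tau2_Z'_iff \<open>t = 0\<close> \<open>s = c - p\<close> Y'_in_wing by auto
    show "{k. hom_shift n Y (tau2 n Z) k} = {c - 1}"
      using hom_shift_Y_tau2_Z_iff by auto
    show "hom_shift n Z' Z 0"
      unfolding hom_shift_obj using \<open>t = 0\<close> q_pos Z'_in_wing by simp
    show "hom_shift n Y Y' (c - p)"
      unfolding hom_shift_obj using \<open>s = c - p\<close> p_pos Y'_in_wing by simp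
    show "0 + (p - 1) + (c - p) = c - 1"
      using p_pos Y'_in_wing by simp
    show "dmap n Z' Y' u"
      using u unfolding dmap_nonzero_def by blast
  qed (rule d)
qed

lemma dmap_Y'_Z'_factors_through_X_X:
  fixes e u :: "'k::field mat \<Rightarrow> 'k"
  assumes e: "dmap_nonzero n X X e" and u: "dmap_nonzero n Y' Z' u"
  shows "\<exists>F G. tmap n Y' X F \<and> tmap n X Z' G \<and> dmap_eq n Y' Z' u (dcomp Y' Z' F e G)"
proof -
  have "\<exists>k. hom_shift n Z' (tau2 n Y') k"
    using u ex_dmap_nonzero_iff by blast
  then have "s = 0" "b = n - 1" "b - q = c + 1 + t"
    unfolding hom_shift_Z'_tau2_Y'_iff using Z'_bound by auto
  show ?thesis
  proof (rule dmap_factors_through_shifts[where i = 0 and j = "q - 1" and l = "b - q" and k = "b - 1"])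
    show "{k. hom_shift n Z' (tau2 n Y') k} = {q - 1}"
      using hom_shift_Z'_tau2_Y'_iff \<open>s = 0\<close> \<open>b = n - 1\<close> \<open>b - q = c + 1 + t\<close> Z'_bound by auto
    show "{k. hom_shift n X (tau2 n X) k} = {b - 1}"
      using hom_shift_X_tau2_X_iff \<open>b = n - 1\<close> by auto
    show "hom_shift n Y' X 0"
      unfolding hom_shift_obj using \<open>s = 0\<close> p_pos Y'_in_wing c_le by simp
    show "hom_shift n X Z' (b - q)"
      unfolding hom_shift_obj using \<open>b - q = c + 1 + t\<close> q_pos Z'_bound by (simp add: ac_simps)
    show "0 + (q - 1) + (b - q) = b - 1"
      using q_pos Z'_bound by simp
    show "dmap n Y' Z' u"
      using u unfolding dmap_nonzero_def by blast
  qed (rule e)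
qed

end

theorem lemma2p2:
  fixes n :: nat and a :: int and b c :: nat
  assumes kclosed: "alg_closed_type TYPE('k::field)"
    and n2: "2 \<le> n"
    and b3: "3 \<le> b" and bn: "b \<le> n - 1"
    and c1: "1 \<le> c" and cb: "c \<le> b - 2"
  defines "X \<equiv> obj n a b"
    and "Y \<equiv> obj n a c"
    and "Z \<equiv> obj n (a + int c + 1) (b - c - 1)"
  assumes Y'_in: "Y' \<in> wing n Y" and Z'_in: "Z' \<in> wing n Z"
  shows
    "\<not> has_nonzero_tmap n Z' Y' TYPE('k)
     \<and> \<not> has_nonzero_tmap n Y' Z' TYPE('k)
     \<and> ((\<exists>u::'k mat \<Rightarrow> 'k. dmap_nonzero n Z' Y' u)
          \<longleftrightarrow> Z' \<in> left_edge n Z \<and> Y' \<in> right_edge n Y)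
     \<and> ((\<exists>u::'k mat \<Rightarrow> 'k. dmap_nonzero n Z' Y' u) \<longrightarrow>
          (\<exists>d::'k mat \<Rightarrow> 'k. dmap_nonzero n Z Y d) \<and>
          (\<forall>(d::'k mat \<Rightarrow> 'k) (u::'k mat \<Rightarrow> 'k). dmap_nonzero n Z Y d \<longrightarrow> dmap_nonzero n Z' Y' u \<longrightarrow>
             (\<exists>F G. tmap n Z' Z F \<and> tmap n Y Y' G \<and>
                    dmap_eq n Z' Y' u (dcomp Z' Y' F d G))))
     \<and> ((\<exists>u::'k mat \<Rightarrow> 'k. dmap_nonzero n Y' Z' u)
          \<longleftrightarrow> Z' \<in> right_edge n Z \<and> Y' \<in> left_edge n Y \<and> ql X = n - 1)
     \<and> ((\<exists>u::'k mat \<Rightarrow> 'k. dmap_nonzero n Y' Z' u) \<longrightarrow>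
          (\<exists>e::'k mat \<Rightarrow> 'k. dmap_nonzero n X X e) \<and>
          (\<forall>(e::'k mat \<Rightarrow> 'k) (u::'k mat \<Rightarrow> 'k). dmap_nonzero n X X e \<longrightarrow> dmap_nonzero n Y' Z' u \<longrightarrow>
             (\<exists>F G. tmap n Y' X F \<and> tmap n X Z' G \<and>
                    dmap_eq n Y' Z' u (dcomp Y' Z' F e G))))"
proof -
  obtain s p where Y': "Y' = obj n (a + int s) p" "1 \<le> p" "s + p \<le> c"
    using Y'_in unfolding Y_def wing_obj by blast
  obtain t q where Z': "Z' = obj n (a + int c + 1 + int t) q" "1 \<le> q" "t + q \<le> b - c - 1"
    using Z'_in unfolding Z_def wing_obj by blast
  interpret W: subwing_triple n a b c s p t q
    using n2 b3 bn c1 cb Y' Z' by unfold_locales auto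
  have ql_X: "ql (obj n a b) = b" by (simp add: ql_def)
  show ?thesis
    unfolding X_def Y_def Z_def Y'(1) Z'(1) ql_X
    using W.no_nonzero_tmap_Z'_Y' W.no_nonzero_tmap_Y'_Z'
      W.ex_dmap_nonzero_Z'_Y'_iff W.ex_dmap_nonzero_Z_Y W.dmap_Z'_Y'_factors_through_Z_Y
      W.ex_dmap_nonzero_Y'_Z'_iff W.ex_dmap_nonzero_X_X W.dmap_Y'_Z'_factors_through_X_X
    by blast
qed

end
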